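(* With notation as below, fix $k\in[N]$ and let $\tau^{(b_k\leftrightarrow c_k)}$ and $\tau^{\mathrm{adj}}$ be as defined below. Then for all $\mathbf s\in\mathbb Z^n$ and all distinct $i,j\in\{1,\dots,n\}$ (whenever the denominators are nonzero), $$(\alpha_i-\alpha_j)\frac{\tau^{(b_k\leftrightarrow c_k)}(\mathbf s)\,\tau^{(b_k\leftrightarrow c_k)}(\mathbf s+e_i+e_j)}{\tau^{(b_k\leftrightarrow c_k)}(\mathbf s+e_i)\,\tau^{(b_k\leftrightarrow c_k)}(\mathbf s+e_j)}=(\alpha_i-\alpha_j)\frac{\tau^{\mathrm{adj}}(\mathbf s)\,\tau^{\mathrm{adj}}(\mathbf s+e_i+e_j)}{\tau^{\mathrm{adj}}(\mathbf s+e_i)\,\tau^{\mathrm{adj}}(\mathbf s+e_j)};$$ that is, the $N$-soliton solution (vertex parameters) obtained by swapping $b_k$ and $c_k$ coincides with the one obtained by keeping $b_k,c_k$ and replacing $A_j\mapsto A_j/Z_{k,j}$ ($j\neq k$), $A_k\mapsto 1/A_k$.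
   Context: Let $\alpha_1,\dots,\alpha_n\in\mathbb R$, $f(t)=\prod_{j}(t-\alpha_j)$, $N\ge1$, and for $i\in[N]=\{1,\dots,N\}$ let $A_i\neq0$, $b_i,c_i\in\mathbb R\setminus\{\alpha_1,\dots,\alpha_n\}$ with $f(b_i)=f(c_i)$, with $b_i\neq c_j$, $b_i\ne b_j$, $c_i\neq c_j$ for $i\neq j$. $e_1,\dots,e_n$ is the standard basis of $\mathbb Z^n$. Put $B_{i,j}=\frac{b_i-\alpha_j}{c_i-\alpha_j}$, $Z_{i,j}=\frac{(b_i-b_j)(c_i-c_j)}{(b_i-c_j)(c_i-b_j)}$, $f_i(\mathbf s)=A_i\prod_jB_{i,j}^{\mathbf s_j}$, $\tau(\mathbf s)=\sum_{T\subseteq[N]}\prod_{\{i<j\}\subseteq T}Z_{i,j}\prod_{i\in T}f_i(\mathbf s)$. $\tau^{(b_k\leftrightarrow c_k)}$ is $\tau$ computed after interchanging the values of $b_k$ and $c_k$; $\tau^{\mathrm{adj}}$ is $\tau$ computed with $A_j$ replaced by $A_j/Z_{k,j}$ for $j\ne k$ and $A_k$ replaced by $1/A_k$. *)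

theory Defs
  imports Complex_Main
begin

text \<open>Indices: alpha, s are indexed by 1..n; A, b, c by 1..N.
  A point s of Z^n is a function nat => int (only values on 1..n matter).\<close>

definition Bmat :: "(nat \<Rightarrow> real) \<Rightarrow> (nat \<Rightarrow> real) \<Rightarrow> (nat \<Rightarrow> real) \<Rightarrow> nat \<Rightarrow> nat \<Rightarrow> real" where
  "Bmat alpha b c i j = (b i - alpha j) / (c i - alpha j)"

definition Zmat :: "(nat \<Rightarrow> real) \<Rightarrow> (nat \<Rightarrow> real) \<Rightarrow> nat \<Rightarrow> nat \<Rightarrow> real" where
  "Zmat b c i j = ((b i - b j) * (c i - c j)) / ((b i - c j) * (c i - b j))"

definition fsol :: "nat \<Rightarrow> (nat \<Rightarrow> real) \<Rightarrow> (nat \<Rightarrow> real) \<Rightarrow> (nat \<Rightarrow> real) \<Rightarrow> (nat \<Rightarrow> real)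
    \<Rightarrow> nat \<Rightarrow> (nat \<Rightarrow> int) \<Rightarrow> real" where
  "fsol n alpha A b c i s = A i * (\<Prod>j\<in>{1..n}. Bmat alpha b c i j powi s j)"

definition tau :: "nat \<Rightarrow> nat \<Rightarrow> (nat \<Rightarrow> real) \<Rightarrow> (nat \<Rightarrow> real) \<Rightarrow> (nat \<Rightarrow> real) \<Rightarrow> (nat \<Rightarrow> real)
    \<Rightarrow> (nat \<Rightarrow> int) \<Rightarrow> real" where
  "tau n N alpha A b c s =
     (\<Sum>T\<in>Pow {1..N}. (\<Prod>(i,j)\<in>{(i,j). i \<in> T \<and> j \<in> T \<and> i < j}. Zmat b c i j)
                       * (\<Prod>i\<in>T. fsol n alpha A b c i s))"

definition shift :: "(nat \<Rightarrow> int) \<Rightarrow> nat \<Rightarrow> (nat \<Rightarrow> int)" where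
  "shift s i = s(i := s i + 1)"

definition polyf :: "nat \<Rightarrow> (nat \<Rightarrow> real) \<Rightarrow> real \<Rightarrow> real" where
  "polyf n alpha t = (\<Prod>j\<in>{1..n}. t - alpha j)"

end

theory Submission imports Defs begin

text \<open>Splitting the subsets of [N] by whether they contain k gives
  \<open>\<tau> = \<tau>\<^sub>0 + f_k \<tau>\<^sub>1\<close>, where \<open>\<tau>\<^sub>0\<close> and \<open>\<tau>\<^sub>1\<close> are sums over the subsets of [N] - {k}
  and \<open>\<tau>\<^sub>1\<close> carries the amplitudes \<open>Z_{k,m} f_m\<close>. Swapping b_k and c_k inverts every
  \<open>Z_{k,m}\<close> and turns f_k into \<open>A_k / g(s)\<close>, where \<open>g(s) = \<Prod>_j B_{k,j}^{s_j}\<close>; the adjoint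
  amplitudes divide each f_m by \<open>Z_{k,m}\<close> and turn f_k into \<open>g(s) / A_k\<close>. Hence the two
  splittings exchange the roles of \<open>\<tau>\<^sub>0\<close> and \<open>\<tau>\<^sub>1\<close>, and
  \<open>g(s) \<tau>_swap(s) = A_k \<tau>_adj(s)\<close>. As \<open>g(s + e_l) = B_{k,l} g(s)\<close>, this gauge factor
  cancels from \<open>\<tau>(s) \<tau>(s+e_i+e_j) / (\<tau>(s+e_i) \<tau>(s+e_j))\<close>. With the convention x / 0 = 0 neither
  the constraint f(b_m) = f(c_m) nor the nonvanishing of the denominators is needed.\<close>

abbreviation ordered_pairs :: "'a::linorder set \<Rightarrow> ('a \<times> 'a) set" where
  "ordered_pairs T \<equiv> {(i, j). i \<in> T \<and> j \<in> T \<and> i < j}"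

definition tau_sum :: "('a::linorder \<Rightarrow> 'a \<Rightarrow> 'b::comm_semiring_1) \<Rightarrow> ('a \<Rightarrow> 'b) \<Rightarrow> 'a set \<Rightarrow> 'b" where
  "tau_sum Z f S = (\<Sum>T\<in>Pow S. (\<Prod>(i, j)\<in>ordered_pairs T. Z i j) * (\<Prod>i\<in>T. f i))"

lemma tau_eq_tau_sum:
  "tau n N alpha A b c s = tau_sum (Zmat b c) (\<lambda>i. fsol n alpha A b c i s) {1..N}"
  unfolding tau_def tau_sum_def ..

lemma ordered_pairs_insert:
  fixes T :: "'a::linorder set"
  assumes "k \<notin> T"
  shows "ordered_pairs (insert k T) = ordered_pairs T \<union> (\<lambda>m. (min k m, max k m)) ` T"
proof (intro set_eqI iffI)
  fix x assume "x \<in> ordered_pairs (insert k T)"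
  then obtain i j where x: "x = (i, j)" "i \<in> insert k T" "j \<in> insert k T" "i < j"
    by blast
  then consider "i = k" "j \<in> T" | "j = k" "i \<in> T" | "i \<in> T" "j \<in> T"
    by blast
  then show "x \<in> ordered_pairs T \<union> (\<lambda>m. (min k m, max k m)) ` T"
  proof cases
    case 1
    then have "x = (min k j, max k j)"
      using x by simp
    with \<open>j \<in> T\<close> show ?thesis by blast
  next
    case 2
    then have "x = (min k i, max k i)"
      using x by simp
    with \<open>i \<in> T\<close> show ?thesis by blast
  next
    case 3
    with x show ?thesis by blast
  qed
next
  fix x assume "x \<in> ordered_pairs T \<union> (\<lambda>m. (min k m, max k m)) ` T"
  then show "x \<in> ordered_pairs (insert k T)"
  proof (elim UnE imageE)
    fix m assume m: "m \<in> T" "x = (min k m, max k m)"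
    with assms consider "m < k" | "k < m"
      using neq_iff by blast
    then show ?thesis
      by cases (use m in \<open>simp_all add: min_absorb1 min_absorb2 max_absorb1 max_absorb2\<close>)
  qed blast
qed

lemma prod_ordered_pairs_insert:
  fixes Z :: "'a::linorder \<Rightarrow> 'a \<Rightarrow> 'b::comm_monoid_mult"
  assumes fin: "finite T" and kT: "k \<notin> T" and sym: "\<And>m. m \<in> T \<Longrightarrow> Z m k = Z k m"
  shows "(\<Prod>(i, j)\<in>ordered_pairs (insert k T). Z i j)
       = (\<Prod>(i, j)\<in>ordered_pairs T. Z i j) * (\<Prod>m\<in>T. Z k m)"
proof -
  let ?h = "\<lambda>m. (min k m, max k m)"
  have fin_pairs: "finite (ordered_pairs T)"
    by (rule finite_subset[of _ "T \<times> T"]) (auto simp: fin)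
  have disj: "ordered_pairs T \<inter> ?h ` T = {}"
    using kT by (auto simp: min_def max_def split: if_splits)
  have inj: "inj_on ?h T"
    using kT by (auto simp: inj_on_def min_def max_def split: if_splits)
  have "(\<Prod>(i, j)\<in>?h ` T. Z i j) = (\<Prod>m\<in>T. Z k m)"
    using sym by (subst prod.reindex[OF inj]) (auto intro!: prod.cong simp: min_def max_def)
  then show ?thesis
    unfolding ordered_pairs_insert[OF kT] using fin fin_pairs disj by (simp add: prod.union_disjoint)
qed

lemma tau_sum_insert:
  assumes fin: "finite S" and kS: "k \<notin> S" and sym: "\<And>m. m \<in> S \<Longrightarrow> Z m k = Z k m"
  shows "tau_sum Z f (insert k S) = tau_sum Z f S + f k * tau_sum Z (\<lambda>m. Z k m * f m) S"
proof -
  have inj: "inj_on (insert k) (Pow S)"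
    using kS by (auto simp: inj_on_def)
  have with_k: "(\<Prod>(i, j)\<in>ordered_pairs (insert k T). Z i j) * (\<Prod>i\<in>insert k T. f i)
      = f k * ((\<Prod>(i, j)\<in>ordered_pairs T. Z i j) * (\<Prod>m\<in>T. Z k m * f m))"
    if "T \<in> Pow S" for T
  proof -
    from that have T: "finite T" "k \<notin> T"
      using fin kS finite_subset by auto
    have "(\<Prod>(i, j)\<in>ordered_pairs (insert k T). Z i j)
        = (\<Prod>(i, j)\<in>ordered_pairs T. Z i j) * (\<Prod>m\<in>T. Z k m)"
      by (rule prod_ordered_pairs_insert) (use T sym that in auto)
    then show ?thesis
      using T by (simp add: prod.distrib mult_ac)
  qed
  have "tau_sum Z f (insert k S)
      = tau_sum Z f S + (\<Sum>T\<in>insert k ` Pow S. (\<Prod>(i, j)\<in>ordered_pairs T. Z i j) * (\<Prod>i\<in>T. f i))"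
    unfolding tau_sum_def Pow_insert using fin kS by (subst sum.union_disjoint) auto
  also have "(\<Sum>T\<in>insert k ` Pow S. (\<Prod>(i, j)\<in>ordered_pairs T. Z i j) * (\<Prod>i\<in>T. f i))
      = f k * tau_sum Z (\<lambda>m. Z k m * f m) S"
    unfolding tau_sum_def sum.reindex[OF inj] sum_distrib_left comp_def
    by (rule sum.cong[OF refl]) (rule with_k)
  finally show ?thesis .
qed

lemma tau_sum_cong:
  assumes "\<And>i j. i \<in> S \<Longrightarrow> j \<in> S \<Longrightarrow> Z i j = Z' i j" and "\<And>i. i \<in> S \<Longrightarrow> f i = f' i"
  shows "tau_sum Z f S = tau_sum Z' f' S"
  unfolding tau_sum_def using assms
  by (intro sum.cong refl arg_cong2[where f = "(*)"] prod.cong) auto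

lemma Zmat_sym: "Zmat b c x y = Zmat b c y x"
  unfolding Zmat_def by (simp add: algebra_simps)

abbreviation adjoint_amplitudes ::
    "(nat \<Rightarrow> real) \<Rightarrow> (nat \<Rightarrow> real) \<Rightarrow> (nat \<Rightarrow> real) \<Rightarrow> nat \<Rightarrow> nat \<Rightarrow> real" where
  "adjoint_amplitudes A b c k \<equiv> \<lambda>m. if m = k then 1 / A k else A m / Zmat b c k m"

lemma tau_split_at:
  assumes "k \<in> {1..N}"
  shows "tau n N alpha A b c s
     = tau_sum (Zmat b c) (\<lambda>m. fsol n alpha A b c m s) ({1..N} - {k})
       + fsol n alpha A b c k s
         * tau_sum (Zmat b c) (\<lambda>m. Zmat b c k m * fsol n alpha A b c m s) ({1..N} - {k})"
  unfolding tau_eq_tau_sum using tau_sum_insert[of "{1..N} - {k}" k "Zmat b c"] assms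
  by (simp add: Zmat_sym insert_absorb)

lemma Zmat_swap_other:
  "i \<noteq> k \<Longrightarrow> j \<noteq> k \<Longrightarrow> Zmat (b(k := c k)) (c(k := b k)) i j = Zmat b c i j"
  unfolding Zmat_def by simp

lemma Zmat_swap_at: "m \<noteq> k \<Longrightarrow> Zmat (b(k := c k)) (c(k := b k)) k m = 1 / Zmat b c k m"
  unfolding Zmat_def by (simp add: mult_ac)

lemma fsol_swap_other:
  "m \<noteq> k \<Longrightarrow> fsol n alpha A (b(k := c k)) (c(k := b k)) m s = fsol n alpha A b c m s"
  unfolding fsol_def Bmat_def by simp

lemma gauge_mult_fsol_swap_at:
  assumes "\<forall>l\<in>{1..n}. Bmat alpha b c k l \<noteq> 0"
  shows "(\<Prod>l\<in>{1..n}. Bmat alpha b c k l powi s l) * fsol n alpha A (b(k := c k)) (c(k := b k)) k s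
       = A k"
proof -
  have "fsol n alpha A (b(k := c k)) (c(k := b k)) k s
      = A k * (\<Prod>l\<in>{1..n}. inverse (Bmat alpha b c k l powi s l))"
    unfolding fsol_def Bmat_def by (auto simp: power_int_inverse[symmetric] intro!: prod.cong)
  also have "\<dots> = A k / (\<Prod>l\<in>{1..n}. Bmat alpha b c k l powi s l)"
    unfolding prod_inversef[unfolded comp_def] by (simp add: divide_inverse)
  finally show ?thesis
    using assms by (simp add: prod_zero_iff)
qed

lemma tau_swap_split:
  assumes k: "k \<in> {1..N}"
  shows "tau n N alpha A (b(k := c k)) (c(k := b k)) s
     = tau_sum (Zmat b c) (\<lambda>m. fsol n alpha A b c m s) ({1..N} - {k})
       + fsol n alpha A (b(k := c k)) (c(k := b k)) k s
         * tau_sum (Zmat b c) (\<lambda>m. fsol n alpha A b c m s / Zmat b c k m) ({1..N} - {k})"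
proof -
  let ?P = "{1..N} - {k}" and ?Z' = "Zmat (b(k := c k)) (c(k := b k))"
  let ?f' = "\<lambda>m. fsol n alpha A (b(k := c k)) (c(k := b k)) m s"
  have "tau_sum ?Z' ?f' ?P = tau_sum (Zmat b c) (\<lambda>m. fsol n alpha A b c m s) ?P"
    by (rule tau_sum_cong) (simp_all add: Zmat_swap_other fsol_swap_other)
  moreover have "tau_sum ?Z' (\<lambda>m. ?Z' k m * ?f' m) ?P
      = tau_sum (Zmat b c) (\<lambda>m. fsol n alpha A b c m s / Zmat b c k m) ?P"
    by (rule tau_sum_cong) (simp_all add: Zmat_swap_other Zmat_swap_at fsol_swap_other)
  ultimately show ?thesis
    unfolding tau_split_at[OF k] by (simp only:)
qed

lemma tau_adjoint_split:
  assumes k: "k \<in> {1..N}" and Z_nz: "\<forall>m\<in>{1..N} - {k}. Zmat b c k m \<noteq> 0"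
  shows "tau n N alpha (adjoint_amplitudes A b c k) b c s
     = tau_sum (Zmat b c) (\<lambda>m. fsol n alpha A b c m s / Zmat b c k m) ({1..N} - {k})
       + (\<Prod>l\<in>{1..n}. Bmat alpha b c k l powi s l) / A k
         * tau_sum (Zmat b c) (\<lambda>m. fsol n alpha A b c m s) ({1..N} - {k})"
proof -
  let ?P = "{1..N} - {k}" and ?g = "\<lambda>m. fsol n alpha (adjoint_amplitudes A b c k) b c m s"
  have g_other: "?g m = fsol n alpha A b c m s / Zmat b c k m" if "m \<noteq> k" for m
    using that unfolding fsol_def by simp
  have "tau_sum (Zmat b c) ?g ?P = tau_sum (Zmat b c) (\<lambda>m. fsol n alpha A b c m s / Zmat b c k m) ?P"
    by (rule tau_sum_cong) (simp_all add: g_other)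
  moreover have "tau_sum (Zmat b c) (\<lambda>m. Zmat b c k m * ?g m) ?P
      = tau_sum (Zmat b c) (\<lambda>m. fsol n alpha A b c m s) ?P"
    by (rule tau_sum_cong) (simp_all add: g_other Z_nz)
  moreover have "?g k = (\<Prod>l\<in>{1..n}. Bmat alpha b c k l powi s l) / A k"
    unfolding fsol_def by simp
  ultimately show ?thesis
    unfolding tau_split_at[OF k] by (simp only:)
qed

lemma tau_swap_eq_gauge_tau_adjoint:
  assumes k: "k \<in> {1..N}" and A_nz: "A k \<noteq> 0"
    and B_nz: "\<forall>l\<in>{1..n}. Bmat alpha b c k l \<noteq> 0"
    and Z_nz: "\<forall>m\<in>{1..N} - {k}. Zmat b c k m \<noteq> 0"
  shows "(\<Prod>l\<in>{1..n}. Bmat alpha b c k l powi s l) * tau n N alpha A (b(k := c k)) (c(k := b k)) s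
       = A k * tau n N alpha (adjoint_amplitudes A b c k) b c s"
  unfolding tau_swap_split[OF k] tau_adjoint_split[OF k Z_nz] distrib_left mult.assoc[symmetric]
    gauge_mult_fsol_swap_at[OF B_nz]
  using A_nz by (simp add: algebra_simps)

lemma prod_powi_shift:
  fixes B :: "nat \<Rightarrow> 'a::field"
  assumes "finite L" and "i \<in> L" and "B i \<noteq> 0"
  shows "(\<Prod>l\<in>L. B l powi shift s i l) = B i * (\<Prod>l\<in>L. B l powi s l)"
proof -
  have "(\<Prod>l\<in>L. B l powi shift s i l) = B i powi (s i + 1) * (\<Prod>l\<in>L - {i}. B l powi s l)"
    using assms by (simp add: prod.remove shift_def)
  also have "\<dots> = B i * (B i powi s i * (\<Prod>l\<in>L - {i}. B l powi s l))"
    using \<open>B i \<noteq> 0\<close> by (simp add: power_int_add_1)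
  also have "\<dots> = B i * (\<Prod>l\<in>L. B l powi s l)"
    using assms by (simp add: prod.remove)
  finally show ?thesis .
qed

lemma hirota_ratio_gauge_invariant:
  fixes \<sigma> \<tau> \<phi> :: "(nat \<Rightarrow> int) \<Rightarrow> 'a::field" and \<beta> :: "nat \<Rightarrow> 'a"
  assumes gauge: "\<And>s. \<sigma> s = \<phi> s * \<tau> s"
    and \<phi>_shift: "\<And>s l. l \<in> {i, j} \<Longrightarrow> \<phi> (shift s l) = \<beta> l * \<phi> s"
    and nz: "\<phi> s \<noteq> 0" "\<beta> i \<noteq> 0" "\<beta> j \<noteq> 0"
  shows "\<sigma> s * \<sigma> (shift (shift s i) j) / (\<sigma> (shift s i) * \<sigma> (shift s j))
       = \<tau> s * \<tau> (shift (shift s i) j) / (\<tau> (shift s i) * \<tau> (shift s j))"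
proof -
  define \<gamma> where "\<gamma> = \<phi> s * \<phi> s * \<beta> i * \<beta> j"
  have "\<gamma> \<noteq> 0"
    unfolding \<gamma>_def using nz by simp
  have "\<sigma> s * \<sigma> (shift (shift s i) j) = \<gamma> * (\<tau> s * \<tau> (shift (shift s i) j))"
    "\<sigma> (shift s i) * \<sigma> (shift s j) = \<gamma> * (\<tau> (shift s i) * \<tau> (shift s j))"
    unfolding gauge \<gamma>_def by (simp_all add: \<phi>_shift algebra_simps)
  then show ?thesis
    using \<open>\<gamma> \<noteq> 0\<close> by simp
qed

theorem corollary8p9:
  fixes n N k :: nat and alpha A b c :: "nat \<Rightarrow> real"
    and s :: "nat \<Rightarrow> int" and i j :: nat
  assumes N1: "N \<ge> 1"
    and A_nz: "\<forall>m\<in>{1..N}. A m \<noteq> 0"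
    and b_notin: "\<forall>m\<in>{1..N}. \<forall>l\<in>{1..n}. b m \<noteq> alpha l"
    and c_notin: "\<forall>m\<in>{1..N}. \<forall>l\<in>{1..n}. c m \<noteq> alpha l"
    and f_eq: "\<forall>m\<in>{1..N}. polyf n alpha (b m) = polyf n alpha (c m)"
    and distinct_bc: "\<forall>m\<in>{1..N}. \<forall>m'\<in>{1..N}. m \<noteq> m' \<longrightarrow>
                  b m \<noteq> c m' \<and> b m \<noteq> b m' \<and> c m \<noteq> c m'"
    and k: "k \<in> {1..N}"
    and ij: "i \<in> {1..n}" "j \<in> {1..n}" "i \<noteq> j"
    and nz_swap:
      "tau n N alpha A (b(k := c k)) (c(k := b k)) (shift s i) \<noteq> 0"
      "tau n N alpha A (b(k := c k)) (c(k := b k)) (shift s j) \<noteq> 0"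
    and nz_adj:
      "tau n N alpha (\<lambda>m. if m = k then 1 / A k else A m / Zmat b c k m) b c (shift s i) \<noteq> 0"
      "tau n N alpha (\<lambda>m. if m = k then 1 / A k else A m / Zmat b c k m) b c (shift s j) \<noteq> 0"
  shows
    "(alpha i - alpha j) *
       (tau n N alpha A (b(k := c k)) (c(k := b k)) s
         * tau n N alpha A (b(k := c k)) (c(k := b k)) (shift (shift s i) j))
     / (tau n N alpha A (b(k := c k)) (c(k := b k)) (shift s i)
         * tau n N alpha A (b(k := c k)) (c(k := b k)) (shift s j))
   = (alpha i - alpha j) *
       (tau n N alpha (\<lambda>m. if m = k then 1 / A k else A m / Zmat b c k m) b c s
         * tau n N alpha (\<lambda>m. if m = k then 1 / A k else A m / Zmat b c k m) b c (shift (shift s i) j))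
     / (tau n N alpha (\<lambda>m. if m = k then 1 / A k else A m / Zmat b c k m) b c (shift s i)
         * tau n N alpha (\<lambda>m. if m = k then 1 / A k else A m / Zmat b c k m) b c (shift s j))"
proof -
  let ?swap = "tau n N alpha A (b(k := c k)) (c(k := b k))"
  let ?adj = "tau n N alpha (adjoint_amplitudes A b c k) b c"
  define \<phi> where "\<phi> = (\<lambda>s. (\<Prod>l\<in>{1..n}. Bmat alpha b c k l powi s l) / A k)"
  have "A k \<noteq> 0"
    using A_nz k by auto
  have B_nz: "\<forall>l\<in>{1..n}. Bmat alpha b c k l \<noteq> 0"
    using b_notin c_notin k unfolding Bmat_def by auto
  have Z_nz: "\<forall>m\<in>{1..N} - {k}. Zmat b c k m \<noteq> 0"
    using distinct_bc k unfolding Zmat_def by (metis DiffE insertI1 mult_eq_0_iff right_minus_eq divide_eq_0_iff)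
  have gauge: "?adj s' = \<phi> s' * ?swap s'" for s'
    using tau_swap_eq_gauge_tau_adjoint[where A = A and s = s', OF k \<open>A k \<noteq> 0\<close> B_nz Z_nz] \<open>A k \<noteq> 0\<close>
    unfolding \<phi>_def by (simp add: field_simps)
  have \<phi>_shift: "\<phi> (shift s' l) = Bmat alpha b c k l * \<phi> s'" if "l \<in> {i, j}" for s' l
    using that ij B_nz unfolding \<phi>_def by (auto simp: prod_powi_shift)
  have "\<phi> s \<noteq> 0"
    unfolding \<phi>_def using B_nz \<open>A k \<noteq> 0\<close> by (simp add: prod_zero_iff)
  then have "?adj s * ?adj (shift (shift s i) j) / (?adj (shift s i) * ?adj (shift s j))
      = ?swap s * ?swap (shift (shift s i) j) / (?swap (shift s i) * ?swap (shift s j))"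
    using B_nz ij by (intro hirota_ratio_gauge_invariant[OF gauge \<phi>_shift]) auto
  then show ?thesis
    by (simp only: times_divide_eq_right[symmetric])
qed

end
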